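(* Let $M_{z_1},M_{z_2}$ be the coordinate multiplication operators on the Hardy space $H^2(\mathbb D^2)$ of the bidisc. Then the triple $\left(\tfrac{M_{z_1}-M_{z_2}}{2},\ M_{z_1}+M_{z_2},\ M_{z_1}M_{z_2}\right)$ is a pure $\mathcal P$-isometry.
   Context: The pentablock is $\mathcal P=\{(a_{21},\operatorname{tr}A,\det A): A\in M_2(\mathbb C),\ \|A\|<1\}$; $\Gamma$ is the closure of the symmetrized bidisc $\{(\operatorname{tr}A,\det A):\|A\|<1\}$, $b\Gamma=\{(s,p)\in\Gamma: s=\bar sp,\ |p|=1\}$, and $b\mathcal P=\{(a,s,p):(s,p)\in b\Gamma,\ |a|^2=1-|s|^2/4\}$. A $\mathcal P$-unitary is a triple of commuting normal operators with Taylor joint spectrum in $b\mathcal P$. A $\mathcal P$-isometry is the restriction of a $\mathcal P$-unitary to a joint invariant subspace. A pure $\mathcal P$-isometry is a $\mathcal P$-isometry $(V_1,V_2,V_3)$ with $V_3$ a pure isometry, i.e. $V_3^{*n}\to0$ strongly. *)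

theory Defs
  imports "HOL-Analysis.Analysis"
begin

definition l2 :: "('i \<Rightarrow> complex) set" where
  "l2 = {f. (\<lambda>i. (cmod (f i))\<^sup>2) summable_on UNIV}"

definition l2_inner :: "('i \<Rightarrow> complex) \<Rightarrow> ('i \<Rightarrow> complex) \<Rightarrow> complex" where
  "l2_inner f g = (\<Sum>\<^sub>\<infinity>i. f i * cnj (g i))"

definition l2_norm :: "('i \<Rightarrow> complex) \<Rightarrow> real" where
  "l2_norm f = sqrt (\<Sum>\<^sub>\<infinity>i. (cmod (f i))\<^sup>2)"

type_synonym 'i op = "('i \<Rightarrow> complex) \<Rightarrow> ('i \<Rightarrow> complex)"

text \<open>Bounded linear operators on l2(I) (only their action on l2 matters).\<close>
definition bounded_op :: "'i op \<Rightarrow> bool" where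
  "bounded_op T \<longleftrightarrow>
     (\<forall>f\<in>l2. T f \<in> l2) \<and>
     (\<forall>f\<in>l2. \<forall>g\<in>l2. \<forall>c. T (\<lambda>i. c * f i + g i) = (\<lambda>i. c * T f i + T g i)) \<and>
     (\<exists>C. \<forall>f\<in>l2. l2_norm (T f) \<le> C * l2_norm f)"

definition is_adjoint :: "'i op \<Rightarrow> 'i op \<Rightarrow> bool" where
  "is_adjoint T S \<longleftrightarrow> bounded_op S \<and>
     (\<forall>f\<in>l2. \<forall>g\<in>l2. l2_inner (T f) g = l2_inner f (S g))"

definition commute_op :: "'i op \<Rightarrow> 'i op \<Rightarrow> bool" where
  "commute_op T S \<longleftrightarrow> (\<forall>f\<in>l2. T (S f) = S (T f))"

definition normal_op :: "'i op \<Rightarrow> bool" where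
  "normal_op T \<longleftrightarrow> bounded_op T \<and> (\<exists>S. is_adjoint T S \<and> commute_op T S)"

definition isometry_op :: "'i op \<Rightarrow> bool" where
  "isometry_op T \<longleftrightarrow> bounded_op T \<and> (\<forall>f\<in>l2. l2_norm (T f) = l2_norm f)"

definition pure_isometry :: "'i op \<Rightarrow> bool" where
  "pure_isometry V \<longleftrightarrow> isometry_op V \<and>
     (\<exists>S. is_adjoint V S \<and> (\<forall>f\<in>l2. (\<lambda>n. l2_norm ((S ^^ n) f)) \<longlonglongrightarrow> 0))"

text \<open>Koszul complex of (T1,T2,T3) on H:
  0 \<rightarrow> H \<rightarrow> H^3 \<rightarrow> H^3 \<rightarrow> H \<rightarrow> 0 with
  d1 x = (T1 x, T2 x, T3 x),
  d2 (x1,x2,x3) = (T2 x3 - T3 x2, T3 x1 - T1 x3, T1 x2 - T2 x1),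
  d3 (y1,y2,y3) = T1 y1 + T2 y2 + T3 y3.
  The triple is (Taylor) non-singular iff this complex is exact.\<close>

definition vadd :: "('i \<Rightarrow> complex) \<Rightarrow> ('i \<Rightarrow> complex) \<Rightarrow> ('i \<Rightarrow> complex)" where
  "vadd f g = (\<lambda>i. f i + g i)"

definition vsub :: "('i \<Rightarrow> complex) \<Rightarrow> ('i \<Rightarrow> complex) \<Rightarrow> ('i \<Rightarrow> complex)" where
  "vsub f g = (\<lambda>i. f i - g i)"

definition vzero :: "'i \<Rightarrow> complex" where
  "vzero = (\<lambda>i. 0)"

definition koszul_exact :: "'i op \<Rightarrow> 'i op \<Rightarrow> 'i op \<Rightarrow> bool" where
  "koszul_exact T1 T2 T3 \<longleftrightarrow>
     (\<forall>x\<in>l2. T1 x = vzero \<and> T2 x = vzero \<and> T3 x = vzero \<longrightarrow> x = vzero) \<and>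
     (\<forall>x1\<in>l2. \<forall>x2\<in>l2. \<forall>x3\<in>l2.
        vsub (T2 x3) (T3 x2) = vzero \<and> vsub (T3 x1) (T1 x3) = vzero \<and> vsub (T1 x2) (T2 x1) = vzero \<longrightarrow>
        (\<exists>y\<in>l2. x1 = T1 y \<and> x2 = T2 y \<and> x3 = T3 y)) \<and>
     (\<forall>y1\<in>l2. \<forall>y2\<in>l2. \<forall>y3\<in>l2.
        vadd (vadd (T1 y1) (T2 y2)) (T3 y3) = vzero \<longrightarrow>
        (\<exists>x1\<in>l2. \<exists>x2\<in>l2. \<exists>x3\<in>l2.
           y1 = vsub (T2 x3) (T3 x2) \<and> y2 = vsub (T3 x1) (T1 x3) \<and> y3 = vsub (T1 x2) (T2 x1))) \<and>
     (\<forall>z\<in>l2. \<exists>y1\<in>l2. \<exists>y2\<in>l2. \<exists>y3\<in>l2. z = vadd (vadd (T1 y1) (T2 y2)) (T3 y3))"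

definition shift_op :: "'i op \<Rightarrow> complex \<Rightarrow> 'i op" where
  "shift_op T c = (\<lambda>f i. T f i - c * f i)"

definition taylor_spectrum :: "'i op \<Rightarrow> 'i op \<Rightarrow> 'i op \<Rightarrow> (complex \<times> complex \<times> complex) set" where
  "taylor_spectrum T1 T2 T3 =
     {(a, s, p). \<not> koszul_exact (shift_op T1 a) (shift_op T2 s) (shift_op T3 p)}"

definition mat_tr :: "complex^2^2 \<Rightarrow> complex" where
  "mat_tr A = A $ 1 $ 1 + A $ 2 $ 2"

definition symmetrized_bidisc :: "(complex \<times> complex) set" where
  "symmetrized_bidisc = {(mat_tr A, det A) | A. onorm (\<lambda>x. A *v x) < 1}"

definition Gamma :: "(complex \<times> complex) set" where
  "Gamma = closure symmetrized_bidisc"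

definition bGamma :: "(complex \<times> complex) set" where
  "bGamma = {(s, p). (s, p) \<in> Gamma \<and> s = cnj s * p \<and> cmod p = 1}"

definition bP :: "(complex \<times> complex \<times> complex) set" where
  "bP = {(a, s, p). (s, p) \<in> bGamma \<and> (cmod a)\<^sup>2 = 1 - (cmod s)\<^sup>2 / 4}"

definition P_unitary :: "'i op \<Rightarrow> 'i op \<Rightarrow> 'i op \<Rightarrow> bool" where
  "P_unitary U1 U2 U3 \<longleftrightarrow>
     normal_op U1 \<and> normal_op U2 \<and> normal_op U3 \<and>
     commute_op U1 U2 \<and> commute_op U1 U3 \<and> commute_op U2 U3 \<and>
     taylor_spectrum U1 U2 U3 \<subseteq> bP"

text \<open>(V1,V2,V3) on l2(J) is the restriction of a P-unitary on l2(K) to a joint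
  invariant subspace: there is an isometric linear embedding E of l2(J) into l2(K)
  with U_i (E f) = E (V_i f).\<close>
definition P_isometry_in :: "'k itself \<Rightarrow> 'j op \<Rightarrow> 'j op \<Rightarrow> 'j op \<Rightarrow> bool" where
  "P_isometry_in _ V1 V2 V3 \<longleftrightarrow>
     (\<exists>(E :: ('j \<Rightarrow> complex) \<Rightarrow> ('k \<Rightarrow> complex)) U1 U2 U3.
        P_unitary U1 U2 U3 \<and>
        (\<forall>f\<in>l2. E f \<in> l2 \<and> l2_norm (E f) = l2_norm f) \<and>
        (\<forall>f\<in>l2. \<forall>g\<in>l2. \<forall>c. E (\<lambda>i. c * f i + g i) = (\<lambda>i. c * E f i + E g i)) \<and>
        (\<forall>f\<in>l2. U1 (E f) = E (V1 f) \<and> U2 (E f) = E (V2 f) \<and> U3 (E f) = E (V3 f)))"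

definition pure_P_isometry_in :: "'k itself \<Rightarrow> 'j op \<Rightarrow> 'j op \<Rightarrow> 'j op \<Rightarrow> bool" where
  "pure_P_isometry_in K V1 V2 V3 \<longleftrightarrow> P_isometry_in K V1 V2 V3 \<and> pure_isometry V3"

text \<open>f = \<Sum> c(m,n) z1^m z2^n \<in> H^2(D^2) is identified with its coefficient family c.\<close>
definition Mz1 :: "(nat \<times> nat) op" where
  "Mz1 f = (\<lambda>(m, n). if m = 0 then 0 else f (m - 1, n))"

definition Mz2 :: "(nat \<times> nat) op" where
  "Mz2 f = (\<lambda>(m, n). if n = 0 then 0 else f (m, n - 1))"

end

theory Submission
  imports Defs "HOL-Real_Asymp.Real_Asymp"
begin

text \<open>Realise \<open>H\<^sup>2(\<bbbD>\<^sup>2)\<close> inside \<open>\<ell>\<^sup>2(\<int>\<^sup>2)\<close> as the families supported on \<open>\<nat>\<^sup>2\<close>. The bilateral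
  shifts \<open>S\<^sub>1, S\<^sub>2\<close> of \<open>\<ell>\<^sup>2(\<int>\<^sup>2)\<close> are commuting unitaries extending \<open>M\<^sub>z\<^sub>1, M\<^sub>z\<^sub>2\<close>, so
  \<open>U = ((S\<^sub>1 - S\<^sub>2)/2, S\<^sub>1 + S\<^sub>2, S\<^sub>1 S\<^sub>2)\<close> is a commuting normal triple extending the given one.
  Its Taylor spectrum lies in \<open>b\<P>\<close>: with \<open>w\<^sub>1 = s/2 + a\<close>, \<open>w\<^sub>2 = s/2 - a\<close>, the Koszul complex
  of \<open>U - (a, s, p)\<close> has a contracting homotopy built from a Neumann-series inverse of
  \<open>S\<^sub>1 - w\<^sub>1\<close> or \<open>S\<^sub>2 - w\<^sub>2\<close> when \<open>|w\<^sub>1| \<noteq> 1\<close> or \<open>|w\<^sub>2| \<noteq> 1\<close>, and from a polynomial identity when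
  \<open>p \<noteq> w\<^sub>1 w\<^sub>2\<close>; in the remaining case \<open>(a, s, p) = ((w\<^sub>1 - w\<^sub>2)/2, w\<^sub>1 + w\<^sub>2, w\<^sub>1 w\<^sub>2)\<close> with
  \<open>|w\<^sub>1| = |w\<^sub>2| = 1\<close>, which is a point of \<open>b\<P>\<close>. Purity holds because \<open>M\<^sub>z\<^sub>1 M\<^sub>z\<^sub>2\<close> is a shift along
  the diagonal, whose adjoint powers only see tails of the coefficient family.\<close>

lemma in_l2_iff: "f \<in> l2 \<longleftrightarrow> (\<lambda>i. (cmod (f i))\<^sup>2) summable_on UNIV"
  by (simp add: l2_def)

lemma l2_norm_nonneg: "l2_norm f \<ge> 0"
  unfolding l2_norm_def by (simp add: infsum_nonneg)

lemma l2_norm_power2: "(l2_norm f)\<^sup>2 = (\<Sum>\<^sub>\<infinity>i. (cmod (f i))\<^sup>2)"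
  unfolding l2_norm_def by (simp add: infsum_nonneg)

lemma l2_vzero: "vzero \<in> l2"
  by (simp add: in_l2_iff vzero_def)

lemma norm_power2_le_l2_norm_power2:
  assumes "f \<in> l2" shows "(cmod (f i))\<^sup>2 \<le> (l2_norm f)\<^sup>2"
proof -
  have "sum (\<lambda>i. (cmod (f i))\<^sup>2) {i} \<le> (\<Sum>\<^sub>\<infinity>i. (cmod (f i))\<^sup>2)"
    by (rule finite_sum_le_infsum) (use assms in \<open>auto simp: in_l2_iff\<close>)
  then show ?thesis by (simp add: l2_norm_power2)
qed

lemma norm_le_l2_norm: "f \<in> l2 \<Longrightarrow> cmod (f i) \<le> l2_norm f"
  using norm_power2_le_l2_norm_power2 l2_norm_nonneg by (rule power2_le_imp_le)

lemma norm_lin_comb_power2_le: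
  "(cmod (a*x + b*y))\<^sup>2 \<le> 2*(cmod a)\<^sup>2*(cmod x)\<^sup>2 + 2*(cmod b)\<^sup>2*(cmod y)\<^sup>2"
proof -
  have "cmod (a*x + b*y) \<le> cmod a * cmod x + cmod b * cmod y"
    by (metis norm_mult norm_triangle_ineq)
  then have "(cmod (a*x + b*y))\<^sup>2 \<le> (cmod a * cmod x + cmod b * cmod y)\<^sup>2"
    by (simp add: power_mono)
  also have "\<dots> \<le> 2*(cmod a)\<^sup>2*(cmod x)\<^sup>2 + 2*(cmod b)\<^sup>2*(cmod y)\<^sup>2"
    using zero_le_power2[of "cmod a * cmod x - cmod b * cmod y"]
    by (simp add: power2_eq_square algebra_simps)
  finally show ?thesis .
qed

lemma
  assumes f: "f \<in> l2" and g: "g \<in> l2"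
  shows l2_lin_comb: "(\<lambda>i. a*f i + b*g i) \<in> l2"
    and l2_norm_lin_comb_le:
      "(l2_norm (\<lambda>i. a*f i + b*g i))\<^sup>2 \<le> 2*(cmod a)\<^sup>2*(l2_norm f)\<^sup>2 + 2*(cmod b)\<^sup>2*(l2_norm g)\<^sup>2"
proof -
  have sf: "(\<lambda>i. (cmod (f i))\<^sup>2) summable_on UNIV" and sg: "(\<lambda>i. (cmod (g i))\<^sup>2) summable_on UNIV"
    using f g by (auto simp: in_l2_iff)
  note sf' = summable_on_cmult_right[OF sf, of "2*(cmod a)\<^sup>2"]
   and sg' = summable_on_cmult_right[OF sg, of "2*(cmod b)\<^sup>2"]
  have sh: "(\<lambda>i. 2*(cmod a)\<^sup>2*(cmod (f i))\<^sup>2 + 2*(cmod b)\<^sup>2*(cmod (g i))\<^sup>2) summable_on UNIV"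
    using summable_on_add[OF sf' sg'] by simp
  have s: "(\<lambda>i. (cmod (a*f i + b*g i))\<^sup>2) summable_on UNIV"
    by (rule summable_on_comparison_test[OF sh]) (auto intro: norm_lin_comb_power2_le)
  then show "(\<lambda>i. a*f i + b*g i) \<in> l2" by (simp add: in_l2_iff)
  have "(l2_norm (\<lambda>i. a*f i + b*g i))\<^sup>2
      \<le> (\<Sum>\<^sub>\<infinity>i. 2*(cmod a)\<^sup>2*(cmod (f i))\<^sup>2 + 2*(cmod b)\<^sup>2*(cmod (g i))\<^sup>2)"
    unfolding l2_norm_power2 by (rule infsum_mono[OF s sh]) (rule norm_lin_comb_power2_le)
  also have "\<dots> = 2*(cmod a)\<^sup>2*(l2_norm f)\<^sup>2 + 2*(cmod b)\<^sup>2*(l2_norm g)\<^sup>2"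
    using infsum_add[OF sf' sg'] infsum_cmult_right[OF sf] infsum_cmult_right[OF sg]
    by (simp add: l2_norm_power2)
  finally show "(l2_norm (\<lambda>i. a*f i + b*g i))\<^sup>2 \<le> 2*(cmod a)\<^sup>2*(l2_norm f)\<^sup>2 + 2*(cmod b)\<^sup>2*(l2_norm g)\<^sup>2" .
qed

lemma l2_scale: "f \<in> l2 \<Longrightarrow> (\<lambda>i. c * f i) \<in> l2"
  using l2_lin_comb[of f f c 0] by simp

lemma l2_vadd: "f \<in> l2 \<Longrightarrow> g \<in> l2 \<Longrightarrow> vadd f g \<in> l2"
  unfolding vadd_def using l2_lin_comb[of f g 1 1] by simp

lemma l2_vsub: "f \<in> l2 \<Longrightarrow> g \<in> l2 \<Longrightarrow> vsub f g \<in> l2"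
  unfolding vsub_def using l2_lin_comb[of f g 1 "-1"] by simp

lemma
  assumes "bij s"
  shows l2_reindex_bij: "(\<lambda>i. f (s i)) \<in> l2 \<longleftrightarrow> f \<in> l2"
    and l2_norm_reindex_bij: "l2_norm (\<lambda>i. f (s i)) = l2_norm f"
proof -
  have b: "bij_betw s UNIV UNIV" using assms by (simp add: bij_def)
  show "(\<lambda>i. f (s i)) \<in> l2 \<longleftrightarrow> f \<in> l2"
    unfolding in_l2_iff using summable_on_reindex_bij_betw[OF b, of "\<lambda>j. (cmod (f j))\<^sup>2"] by simp
  show "l2_norm (\<lambda>i. f (s i)) = l2_norm f"
    unfolding l2_norm_def using infsum_reindex_bij_betw[OF b, of "\<lambda>j. (cmod (f j))\<^sup>2"] by simp
qed

lemma l2_inner_summable: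
  assumes f: "f \<in> l2" and g: "g \<in> l2"
  shows "(\<lambda>i. f i * cnj (g i)) summable_on UNIV"
proof -
  have sh: "(\<lambda>i. (cmod (f i))\<^sup>2 + (cmod (g i))\<^sup>2) summable_on UNIV"
    using f g by (auto simp: in_l2_iff intro: summable_on_add)
  have "(\<lambda>i. norm (f i * cnj (g i))) summable_on UNIV"
  proof (rule Infinite_Sum.abs_summable_on_comparison_test'[OF sh])
    fix i
    have "cmod (f i) * cmod (g i) \<le> (cmod (f i))\<^sup>2 + (cmod (g i))\<^sup>2"
      using sum_squares_bound[of "cmod (f i)" "cmod (g i)"]
        mult_nonneg_nonneg[OF norm_ge_zero norm_ge_zero, of "f i" "g i"] by linarith
    then show "norm (f i * cnj (g i)) \<le> (cmod (f i))\<^sup>2 + (cmod (g i))\<^sup>2"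
      by (simp add: norm_mult)
  qed
  then show ?thesis by (rule Infinite_Sum.abs_summable_summable)
qed

lemma l2_inner_lin_comb_left:
  assumes "f \<in> l2" "g \<in> l2" "h \<in> l2"
  shows "l2_inner (\<lambda>i. a*f i + b*g i) h = a * l2_inner f h + b * l2_inner g h"
proof -
  have s: "(\<lambda>i. f i * cnj (h i)) summable_on UNIV" "(\<lambda>i. g i * cnj (h i)) summable_on UNIV"
    using assms l2_inner_summable by auto
  have "l2_inner (\<lambda>i. a*f i + b*g i) h = (\<Sum>\<^sub>\<infinity>i. a*(f i * cnj (h i)) + b*(g i * cnj (h i)))"
    unfolding l2_inner_def by (simp add: algebra_simps)
  also have "\<dots> = a * l2_inner f h + b * l2_inner g h"
    using infsum_add[OF summable_on_cmult_right[OF s(1)] summable_on_cmult_right[OF s(2)]]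
      infsum_cmult_right[OF s(1)] infsum_cmult_right[OF s(2)] by (simp add: l2_inner_def)
  finally show ?thesis .
qed

lemma l2_inner_lin_comb_right:
  assumes "f \<in> l2" "g \<in> l2" "h \<in> l2"
  shows "l2_inner h (\<lambda>i. a*f i + b*g i) = cnj a * l2_inner h f + cnj b * l2_inner h g"
proof -
  have s: "(\<lambda>i. h i * cnj (f i)) summable_on UNIV" "(\<lambda>i. h i * cnj (g i)) summable_on UNIV"
    using assms l2_inner_summable by auto
  have "l2_inner h (\<lambda>i. a*f i + b*g i) = (\<Sum>\<^sub>\<infinity>i. cnj a*(h i * cnj (f i)) + cnj b*(h i * cnj (g i)))"
    unfolding l2_inner_def by (simp add: algebra_simps)
  also have "\<dots> = cnj a * l2_inner h f + cnj b * l2_inner h g"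
    using infsum_add[OF summable_on_cmult_right[OF s(1)] summable_on_cmult_right[OF s(2)]]
      infsum_cmult_right[OF s(1)] infsum_cmult_right[OF s(2)] by (simp add: l2_inner_def)
  finally show ?thesis .
qed

lemma bij_of_inverses: "(\<And>x. s' (s x) = x) \<Longrightarrow> (\<And>x. s (s' x) = x) \<Longrightarrow> bij s"
  by (rule o_bij[of s']) (simp_all add: fun_eq_iff)

lemma l2_inner_reindex:
  assumes "\<And>x. s' (s x) = x" "\<And>x. s (s' x) = x"
  shows "l2_inner (\<lambda>i. f (s i)) g = l2_inner f (\<lambda>i. g (s' i))"
proof -
  have "bij_betw s UNIV UNIV" using bij_of_inverses[OF assms] by (simp add: bij_def)
  from infsum_reindex_bij_betw[OF this, of "\<lambda>j. f j * cnj (g (s' j))"]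
  show ?thesis by (simp add: l2_inner_def assms)
qed

definition l2_linear :: "'i op \<Rightarrow> bool" where
  "l2_linear T \<longleftrightarrow> (\<forall>f\<in>l2. T f \<in> l2) \<and>
     (\<forall>f\<in>l2. \<forall>g\<in>l2. \<forall>c. T (\<lambda>i. c * f i + g i) = (\<lambda>i. c * T f i + T g i))"

lemma l2_linear_l2: "l2_linear T \<Longrightarrow> f \<in> l2 \<Longrightarrow> T f \<in> l2"
  by (simp add: l2_linear_def)

lemma l2_linearD: "l2_linear T \<Longrightarrow> f \<in> l2 \<Longrightarrow> g \<in> l2 \<Longrightarrow> T (\<lambda>i. c * f i + g i) = (\<lambda>i. c * T f i + T g i)"
  by (simp add: l2_linear_def)

lemma bounded_op_l2_linear: "bounded_op T \<Longrightarrow> l2_linear T"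
  by (simp add: bounded_op_def l2_linear_def)

lemma l2_linear_vzero: "l2_linear T \<Longrightarrow> T vzero = vzero"
  using l2_linearD[OF _ l2_vzero l2_vzero, of T "-1"] by (simp add: vzero_def)

lemma l2_linear_scale: "l2_linear T \<Longrightarrow> f \<in> l2 \<Longrightarrow> T (\<lambda>i. c * f i) = (\<lambda>i. c * T f i)"
  using l2_linearD[OF _ _ l2_vzero, of T f c] l2_linear_vzero[of T] by (simp add: vzero_def)

lemma l2_linear_lin_comb:
  "l2_linear T \<Longrightarrow> f \<in> l2 \<Longrightarrow> g \<in> l2 \<Longrightarrow> T (\<lambda>i. a * f i + b * g i) = (\<lambda>i. a * T f i + b * T g i)"
  using l2_linearD[of T f "\<lambda>i. b * g i" a] l2_linear_scale[of T g b] l2_scale[of g b] by simp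

lemma l2_linear_lin_comb3:
  assumes T: "l2_linear T" and fgh: "f \<in> l2" "g \<in> l2" "h \<in> l2"
  shows "T (\<lambda>i. a * f i + b * g i + c * h i) = (\<lambda>i. a * T f i + b * T g i + c * T h i)"
  using l2_linearD[OF T fgh(1) l2_lin_comb[OF fgh(2,3)], of a] l2_linear_lin_comb[OF T fgh(2,3)]
  by (simp add: add.assoc)

lemma l2_linear_vadd: "l2_linear T \<Longrightarrow> f \<in> l2 \<Longrightarrow> g \<in> l2 \<Longrightarrow> T (vadd f g) = vadd (T f) (T g)"
  unfolding vadd_def using l2_linearD[of T f g 1] by simp

lemma l2_linear_vsub: "l2_linear T \<Longrightarrow> f \<in> l2 \<Longrightarrow> g \<in> l2 \<Longrightarrow> T (vsub f g) = vsub (T f) (T g)"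
  unfolding vsub_def using l2_linearD[of T g f "-1"] by (simp add: algebra_simps)

lemma l2_linear_shift_op:
  assumes T: "l2_linear T" shows "l2_linear (shift_op T c)"
  unfolding l2_linear_def
proof (intro conjI ballI allI)
  fix f g :: "'a \<Rightarrow> complex" and d assume f: "f \<in> l2" and g: "g \<in> l2"
  show "shift_op T c f \<in> l2"
    using l2_lin_comb[OF l2_linear_l2[OF T f] f, of 1 "-c"] by (simp add: shift_op_def)
  show "shift_op T c (\<lambda>i. d * f i + g i) = (\<lambda>i. d * shift_op T c f i + shift_op T c g i)"
    unfolding shift_op_def using l2_linearD[OF T f g, of d] by (simp add: fun_eq_iff algebra_simps)
qed

section \<open>Neumann series of a composition operator\<close>

text \<open>For \<open>|c| < 1\<close> this is \<open>(I - c C\<^sub>t)\<^sup>-\<^sup>1 f\<close>, where \<open>C\<^sub>t f = f \<circ> t\<close>.\<close>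
definition neumann :: "('k \<Rightarrow> 'k) \<Rightarrow> complex \<Rightarrow> 'k op" where
  "neumann t c f = (\<lambda>i. \<Sum>k. c^k * f ((t^^k) i))"

lemma neumann_term_bound:
  "f \<in> l2 \<Longrightarrow> norm (c^k * f ((t^^k) i)) \<le> (cmod c)^k * l2_norm f"
  by (simp add: norm_mult norm_power norm_le_l2_norm mult_left_mono)

lemma neumann_summable:
  assumes "cmod c < 1" "f \<in> l2"
  shows "summable (\<lambda>k. c^k * f ((t^^k) i))"
proof (rule summable_comparison_test')
  show "summable (\<lambda>k. (cmod c)^k * l2_norm f)"
    using assms(1) by (intro summable_mult2 summable_geometric) simp
qed (rule neumann_term_bound[OF assms(2)])

lemma neumann_lin:
  assumes "cmod c < 1" "f \<in> l2" "g \<in> l2"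
  shows "neumann t c (\<lambda>i. a*f i + g i) = (\<lambda>i. a * neumann t c f i + neumann t c g i)"
proof
  fix i
  note sf = neumann_summable[OF assms(1,2)] and sg = neumann_summable[OF assms(1,3)]
  have "neumann t c (\<lambda>i. a*f i + g i) i = (\<Sum>k. a * (c^k * f ((t^^k) i)) + c^k * g ((t^^k) i))"
    unfolding neumann_def by (simp add: algebra_simps)
  also have "\<dots> = (\<Sum>k. a * (c^k * f ((t^^k) i))) + (\<Sum>k. c^k * g ((t^^k) i))"
    by (rule suminf_add[OF summable_mult[OF sf] sg, symmetric])
  also have "\<dots> = a * neumann t c f i + neumann t c g i"
    unfolding neumann_def using suminf_mult[OF sf, of a] by simp
  finally show "neumann t c (\<lambda>i. a*f i + g i) i = a * neumann t c f i + neumann t c g i" .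
qed

lemma neumann_telescope:
  assumes "cmod c < 1" "f \<in> l2"
  shows "neumann t c (\<lambda>i. f i - c * f (t i)) = f"
proof
  fix i
  define F where "F k = c^k * f ((t^^k) i)" for k
  have "F \<longlonglongrightarrow> 0"
  proof (rule Lim_null_comparison)
    show "\<forall>\<^sub>F k in sequentially. norm (F k) \<le> (cmod c)^k * l2_norm f"
      unfolding F_def by (intro always_eventually allI neumann_term_bound[OF assms(2)])
    show "(\<lambda>k. (cmod c)^k * l2_norm f) \<longlonglongrightarrow> 0"
      using assms(1) by (intro tendsto_mult_left_zero LIMSEQ_power_zero) simp_all
  qed
  then have "(\<lambda>k. F k - F (Suc k)) sums F 0"
    using telescope_sums' by fastforce
  moreover have "(\<lambda>k. F k - F (Suc k)) = (\<lambda>k. c^k * (f ((t^^k) i) - c * f (t ((t^^k) i))))"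
    by (simp add: F_def algebra_simps)
  ultimately show "neumann t c (\<lambda>i. f i - c * f (t i)) i = f i"
    unfolding neumann_def by (simp add: F_def sums_iff)
qed

lemma neumann_comp_commute:
  assumes "\<And>x. t (r x) = r (t x)"
  shows "neumann t c (\<lambda>i. f (r i)) = (\<lambda>i. neumann t c f (r i))"
proof -
  have "(t^^k) (r x) = r ((t^^k) x)" for k x
    by (induction k) (simp_all add: assms)
  then show ?thesis unfolding neumann_def by simp
qed

text \<open>Cauchy-Schwarz against the geometric weights \<open>|c|\<^sup>k\<close>.\<close>
lemma norm_power2_geometric_series_le:
  fixes x :: "nat \<Rightarrow> complex"
  assumes c: "cmod c < 1" and s: "summable (\<lambda>k. c^k * x k)"
    and h: "summable (\<lambda>k. (cmod c)^k * (cmod (x k))\<^sup>2)"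
  shows "(cmod (\<Sum>k. c^k * x k))\<^sup>2 \<le> (1/(1 - cmod c)) * (\<Sum>k. (cmod c)^k * (cmod (x k))\<^sup>2)"
proof -
  define r where "r = cmod c"
  have r0: "0 \<le> r" "r < 1" using c by (auto simp: r_def)
  have geo: "summable (\<lambda>k. r^k)" "(\<Sum>k. r^k) = 1/(1-r)" using r0 by (auto simp: suminf_geometric)
  have partial: "(cmod (\<Sum>k<n. c^k * x k))\<^sup>2 \<le> (1/(1-r)) * (\<Sum>k. r^k * (cmod (x k))\<^sup>2)" for n
  proof -
    have "cmod (\<Sum>k<n. c^k * x k) \<le> (\<Sum>k<n. r^k * cmod (x k))"
      by (rule order_trans[OF norm_sum]) (simp add: norm_mult norm_power r_def)
    also have "(\<Sum>k<n. r^k * cmod (x k)) = (\<Sum>k<n. sqrt (r^k) * (sqrt (r^k) * cmod (x k)))"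
      by (rule sum.cong) (use r0 in \<open>auto simp: mult.assoc[symmetric]\<close>)
    finally have "(cmod (\<Sum>k<n. c^k * x k))\<^sup>2 \<le> (\<Sum>k<n. sqrt (r^k) * (sqrt (r^k) * cmod (x k)))\<^sup>2"
      by (simp add: power_mono)
    also have "\<dots> \<le> (\<Sum>k<n. (sqrt (r^k))\<^sup>2) * (\<Sum>k<n. (sqrt (r^k) * cmod (x k))\<^sup>2)"
      by (rule Cauchy_Schwarz_ineq_sum)
    also have "\<dots> = (\<Sum>k<n. r^k) * (\<Sum>k<n. r^k * (cmod (x k))\<^sup>2)"
      using r0 by (simp add: power_mult_distrib)
    also have "\<dots> \<le> (1/(1-r)) * (\<Sum>k. r^k * (cmod (x k))\<^sup>2)"
    proof (rule mult_mono)
      show "(\<Sum>k<n. r^k) \<le> 1/(1-r)" using sum_le_suminf[OF geo(1), of "{..<n}"] geo(2) r0 by simp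
      show "(\<Sum>k<n. r^k * (cmod (x k))\<^sup>2) \<le> (\<Sum>k. r^k * (cmod (x k))\<^sup>2)"
        using sum_le_suminf[OF h[folded r_def], of "{..<n}"] r0 by simp
      show "0 \<le> (\<Sum>k<n. r^k * (cmod (x k))\<^sup>2)" using r0 by (intro sum_nonneg) simp
    qed (use r0 in simp)
    finally show ?thesis .
  qed
  have "(\<lambda>n. (cmod (\<Sum>k<n. c^k * x k))\<^sup>2) \<longlonglongrightarrow> (cmod (\<Sum>k. c^k * x k))\<^sup>2"
    by (intro tendsto_intros summable_LIMSEQ s)
  then show ?thesis
    by (rule LIMSEQ_le_const2) (use partial in \<open>auto simp: r_def\<close>)
qed

lemma summable_geometric_orbit:
  assumes r: "0 \<le> r" "r < 1" and f: "f \<in> l2"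
  shows "summable (\<lambda>k. r^k * (cmod (f ((t^^k) i)))\<^sup>2)"
proof (rule summable_comparison_test')
  show "summable (\<lambda>k. r^k * (l2_norm f)\<^sup>2)"
    using r by (intro summable_mult2 summable_geometric) simp
  show "norm (r^k * (cmod (f ((t^^k) i)))\<^sup>2) \<le> r^k * (l2_norm f)\<^sup>2" for k
    using r norm_power2_le_l2_norm_power2[OF f] by (simp add: mult_left_mono)
qed

lemma summable_on_geometric_orbit_sum:
  fixes t :: "'i \<Rightarrow> 'i"
  assumes r: "0 \<le> r" "r < 1" and t: "bij t" and f: "f \<in> l2"
  shows "(\<lambda>i. \<Sum>k. r^k * (cmod (f ((t^^k) i)))\<^sup>2) summable_on UNIV"
proof (rule nonneg_bdd_above_summable_on)
  note sk = summable_geometric_orbit[OF r f]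
  show "0 \<le> (\<Sum>k. r^k * (cmod (f ((t^^k) i)))\<^sup>2)" for i
    using r sk by (intro suminf_nonneg) auto
  show "bdd_above (sum (\<lambda>i. \<Sum>k. r^k * (cmod (f ((t^^k) i)))\<^sup>2) ` {F. F \<subseteq> UNIV \<and> finite F})"
  proof (rule bdd_aboveI2)
    fix F :: "'i set" assume "F \<in> {F. F \<subseteq> UNIV \<and> finite F}"
    then have fin: "finite F" by simp
    have orbit_slice: "(\<Sum>i\<in>F. (cmod (f ((t^^k) i)))\<^sup>2) \<le> (l2_norm f)\<^sup>2" for k
    proof -
      have inj: "inj_on (t^^k) F" by (rule inj_on_subset[OF inj_fn[OF bij_is_inj[OF t]]]) simp
      have "(\<Sum>i\<in>F. (cmod (f ((t^^k) i)))\<^sup>2) = (\<Sum>j\<in>(t^^k)`F. (cmod (f j))\<^sup>2)"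
        using sum.reindex[OF inj, of "\<lambda>j. (cmod (f j))\<^sup>2"] by simp
      also have "\<dots> \<le> (\<Sum>\<^sub>\<infinity>j. (cmod (f j))\<^sup>2)"
        by (rule finite_sum_le_infsum) (use f fin in \<open>auto simp: in_l2_iff\<close>)
      finally show ?thesis by (simp add: l2_norm_power2)
    qed
    have "(\<Sum>i\<in>F. \<Sum>k. r^k * (cmod (f ((t^^k) i)))\<^sup>2) = (\<Sum>k. \<Sum>i\<in>F. r^k * (cmod (f ((t^^k) i)))\<^sup>2)"
      by (rule suminf_sum[symmetric]) (rule sk)
    also have "\<dots> \<le> (\<Sum>k. r^k * (l2_norm f)\<^sup>2)"
    proof (rule suminf_le)
      show "summable (\<lambda>k. \<Sum>i\<in>F. r^k * (cmod (f ((t^^k) i)))\<^sup>2)"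
        by (rule summable_sum) (rule sk)
      show "summable (\<lambda>k. r^k * (l2_norm f)\<^sup>2)"
        using r by (intro summable_mult2 summable_geometric) simp
      show "(\<Sum>i\<in>F. r^k * (cmod (f ((t^^k) i)))\<^sup>2) \<le> r^k * (l2_norm f)\<^sup>2" for k
        using orbit_slice[of k] r by (simp add: sum_distrib_left[symmetric] mult_left_mono)
    qed
    finally show "(\<Sum>i\<in>F. \<Sum>k. r^k * (cmod (f ((t^^k) i)))\<^sup>2) \<le> (\<Sum>k. r^k * (l2_norm f)\<^sup>2)" .
  qed
qed

lemma l2_neumann:
  assumes c: "cmod c < 1" and t: "bij t" and f: "f \<in> l2"
  shows "neumann t c f \<in> l2"
proof -
  note orbit = summable_on_geometric_orbit_sum[OF norm_ge_zero c t f]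
  have "(\<lambda>i. (cmod (neumann t c f i))\<^sup>2) summable_on UNIV"
  proof (rule summable_on_comparison_test[OF summable_on_cmult_right[OF orbit]])
    show "(cmod (neumann t c f i))\<^sup>2 \<le> 1 / (1 - cmod c) * (\<Sum>k. (cmod c)^k * (cmod (f ((t^^k) i)))\<^sup>2)"
      if "i \<in> UNIV" for i
      using norm_power2_geometric_series_le[OF c neumann_summable[OF c f, of t i]
          summable_geometric_orbit[OF norm_ge_zero c f, of t i]]
      by (simp add: neumann_def)
  qed simp
  then show ?thesis by (simp add: in_l2_iff)
qed

section \<open>Exactness of a Koszul complex from a contracting homotopy\<close>

lemma vsub_eq_vzero_iff: "vsub f g = vzero \<longleftrightarrow> f = g"
  by (auto simp: vsub_def vzero_def fun_eq_iff)

locale koszul_homotopy =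
  fixes T1 T2 T3 B1 B2 B3 :: "'i op"
  assumes linear: "l2_linear T1" "l2_linear T2" "l2_linear T3"
    "l2_linear B1" "l2_linear B2" "l2_linear B3"
    and commute: "\<And>T B. T \<in> {T1, T2, T3} \<Longrightarrow> B \<in> {B1, B2, B3} \<Longrightarrow> commute_op T B"
    and homotopy: "\<And>f. f \<in> l2 \<Longrightarrow> vadd (vadd (B1 (T1 f)) (B2 (T2 f))) (B3 (T3 f)) = f"
begin

lemma commutes: "T \<in> {T1, T2, T3} \<Longrightarrow> B \<in> {B1, B2, B3} \<Longrightarrow> f \<in> l2 \<Longrightarrow> T (B f) = B (T f)"
  using commute unfolding commute_op_def by blast

lemma linear_T: "T \<in> {T1, T2, T3} \<Longrightarrow> l2_linear T"
  using linear(1-3) by blast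

lemma homotopy_pointwise: "f \<in> l2 \<Longrightarrow> B1 (T1 f) i + B2 (T2 f) i + B3 (T3 f) i = f i"
  using homotopy by (simp add: vadd_def fun_eq_iff)

lemma d1_injective:
  assumes "x \<in> l2" "T1 x = vzero" "T2 x = vzero" "T3 x = vzero"
  shows "x = vzero"
  using homotopy[OF assms(1)] assms(2-4) l2_linear_vzero[OF linear(4)]
    l2_linear_vzero[OF linear(5)] l2_linear_vzero[OF linear(6)]
  by (simp add: vadd_def vzero_def)

lemma ker_d2_subset_range_d1:
  assumes x: "x1 \<in> l2" "x2 \<in> l2" "x3 \<in> l2"
    and cycle: "T2 x3 = T3 x2" "T3 x1 = T1 x3" "T1 x2 = T2 x1"
  shows "\<exists>y\<in>l2. x1 = T1 y \<and> x2 = T2 y \<and> x3 = T3 y"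
proof
  define y where "y = vadd (vadd (B1 x1) (B2 x2)) (B3 x3)"
  have Bx: "B1 x1 \<in> l2" "B2 x2 \<in> l2" "B3 x3 \<in> l2"
    using x linear by (auto intro: l2_linear_l2)
  then show "y \<in> l2" unfolding y_def by (intro l2_vadd)
  have "T y = vadd (vadd (B1 (T x1)) (B2 (T x2))) (B3 (T x3))" if T: "T \<in> {T1, T2, T3}" for T
    using Bx x commutes[OF T, of B1] commutes[OF T, of B2] commutes[OF T, of B3]
    by (simp add: y_def l2_linear_vadd[OF linear_T[OF T]] l2_vadd)
  then show "x1 = T1 y \<and> x2 = T2 y \<and> x3 = T3 y"
    using homotopy[OF x(1)] homotopy[OF x(2)] homotopy[OF x(3)] cycle by simp
qed

lemma ker_d3_subset_range_d2:
  assumes y: "y1 \<in> l2" "y2 \<in> l2" "y3 \<in> l2"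
    and cycle: "vadd (vadd (T1 y1) (T2 y2)) (T3 y3) = vzero"
  shows "\<exists>x1\<in>l2. \<exists>x2\<in>l2. \<exists>x3\<in>l2.
           y1 = vsub (T2 x3) (T3 x2) \<and> y2 = vsub (T3 x1) (T1 x3) \<and> y3 = vsub (T1 x2) (T2 x1)"
proof -
  have Ty: "T1 y1 \<in> l2" "T2 y2 \<in> l2" "T3 y3 \<in> l2" using y linear by (auto intro: l2_linear_l2)
  have cycle_B: "B (T1 y1) i + B (T2 y2) i + B (T3 y3) i = 0" if B: "l2_linear B" for B i
  proof -
    have "vadd (vadd (B (T1 y1)) (B (T2 y2))) (B (T3 y3)) = vzero"
      using arg_cong[OF cycle, of B] l2_linear_vzero[OF B] Ty
      by (simp add: l2_linear_vadd[OF B] l2_vadd)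
    then show ?thesis by (simp add: vadd_def vzero_def fun_eq_iff)
  qed
  define x1 where "x1 = vsub (B3 y2) (B2 y3)"
  define x2 where "x2 = vsub (B1 y3) (B3 y1)"
  define x3 where "x3 = vsub (B2 y1) (B1 y2)"
  have x: "x1 \<in> l2" "x2 \<in> l2" "x3 \<in> l2"
    unfolding x1_def x2_def x3_def using y linear by (auto intro: l2_vsub l2_linear_l2)
  have "T x1 i = B3 (T y2) i - B2 (T y3) i" "T x2 i = B1 (T y3) i - B3 (T y1) i"
    "T x3 i = B2 (T y1) i - B1 (T y2) i" if T: "T \<in> {T1, T2, T3}" for T i
    using y l2_linear_l2[OF linear(4)] l2_linear_l2[OF linear(5)] l2_linear_l2[OF linear(6)]
      commutes[OF T, of B1] commutes[OF T, of B2] commutes[OF T, of B3]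
    by (simp_all add: x1_def x2_def x3_def l2_linear_vsub[OF linear_T[OF T]]) (simp_all add: vsub_def)
  note Tx = this[of T1, simplified] this[of T2, simplified] this[of T3, simplified]
  have "y1 i = T2 x3 i - T3 x2 i" for i
    unfolding Tx using cycle_B[OF linear(4), of i] homotopy_pointwise[OF y(1), of i] by algebra
  moreover have "y2 i = T3 x1 i - T1 x3 i" for i
    unfolding Tx using cycle_B[OF linear(5), of i] homotopy_pointwise[OF y(2), of i] by algebra
  moreover have "y3 i = T1 x2 i - T2 x1 i" for i
    unfolding Tx using cycle_B[OF linear(6), of i] homotopy_pointwise[OF y(3), of i] by algebra
  ultimately have "y1 = vsub (T2 x3) (T3 x2)" "y2 = vsub (T3 x1) (T1 x3)" "y3 = vsub (T1 x2) (T2 x1)"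
    by (simp_all add: vsub_def fun_eq_iff)
  with x show ?thesis by blast
qed

lemma d3_surjective:
  assumes "z \<in> l2"
  shows "\<exists>y1\<in>l2. \<exists>y2\<in>l2. \<exists>y3\<in>l2. z = vadd (vadd (T1 y1) (T2 y2)) (T3 y3)"
proof (intro bexI)
  show "z = vadd (vadd (T1 (B1 z)) (T2 (B2 z))) (T3 (B3 z))"
    using homotopy[OF assms] commutes[of _ _ z] assms by simp
qed (use assms linear(4-6) l2_linear_l2 in blast)+

theorem koszul_exact: "koszul_exact T1 T2 T3"
  unfolding koszul_exact_def vsub_eq_vzero_iff
  using d1_injective ker_d2_subset_range_d1 ker_d3_subset_range_d2 d3_surjective
  by (intro conjI ballI impI allI) (simp_all del: bex_simps)

end

definition comp_comb :: "('k \<Rightarrow> 'k) \<Rightarrow> ('k \<Rightarrow> 'k) \<Rightarrow> complex \<Rightarrow> complex \<Rightarrow> 'k op" where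
  "comp_comb r1 r2 a b f = (\<lambda>i. a * f (r1 i) + b * f (r2 i))"

lemma l2_comp_comb: "bij r1 \<Longrightarrow> bij r2 \<Longrightarrow> f \<in> l2 \<Longrightarrow> comp_comb r1 r2 a b f \<in> l2"
  unfolding comp_comb_def by (rule l2_lin_comb) (simp_all add: l2_reindex_bij)

lemma bounded_op_comp_comb:
  assumes r: "bij r1" "bij r2"
  shows "bounded_op (comp_comb r1 r2 a b)"
  unfolding bounded_op_def
proof (intro conjI ballI allI exI)
  show "comp_comb r1 r2 a b f \<in> l2" if "f \<in> l2" for f
    using l2_comp_comb[OF r that] .
  show "comp_comb r1 r2 a b (\<lambda>i. c * f i + g i) = (\<lambda>i. c * comp_comb r1 r2 a b f i + comp_comb r1 r2 a b g i)"
    for f g c by (simp add: comp_comb_def fun_eq_iff algebra_simps)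
  define C where "C = sqrt (2*(cmod a)\<^sup>2 + 2*(cmod b)\<^sup>2)"
  fix f :: "'a \<Rightarrow> complex" assume f: "f \<in> l2"
  have "(l2_norm (comp_comb r1 r2 a b f))\<^sup>2 \<le> 2*(cmod a)\<^sup>2*(l2_norm f)\<^sup>2 + 2*(cmod b)\<^sup>2*(l2_norm f)\<^sup>2"
    using l2_norm_lin_comb_le[of "\<lambda>i. f (r1 i)" "\<lambda>i. f (r2 i)" a b] f r
    by (simp add: comp_comb_def l2_reindex_bij l2_norm_reindex_bij)
  also have "\<dots> = (C * l2_norm f)\<^sup>2" by (simp add: C_def power_mult_distrib algebra_simps)
  finally show "l2_norm (comp_comb r1 r2 a b f) \<le> C * l2_norm f"
    by (rule power2_le_imp_le) (simp add: C_def l2_norm_nonneg)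
qed

lemma l2_linear_comp_comb: "bij r1 \<Longrightarrow> bij r2 \<Longrightarrow> l2_linear (comp_comb r1 r2 a b)"
  by (rule bounded_op_l2_linear[OF bounded_op_comp_comb])

lemma is_adjoint_comp_comb:
  assumes r1: "\<And>x. r1' (r1 x) = x" "\<And>x. r1 (r1' x) = x"
    and r2: "\<And>x. r2' (r2 x) = x" "\<And>x. r2 (r2' x) = x"
  shows "is_adjoint (comp_comb r1 r2 a b) (comp_comb r1' r2' (cnj a) (cnj b))"
  unfolding is_adjoint_def
proof (intro conjI ballI)
  have b: "bij r1" "bij r2" "bij r1'" "bij r2'"
    using bij_of_inverses[of r1' r1] bij_of_inverses[of r1 r1'] bij_of_inverses[of r2' r2]
      bij_of_inverses[of r2 r2'] assms by auto
  show "bounded_op (comp_comb r1' r2' (cnj a) (cnj b))" by (rule bounded_op_comp_comb[OF b(3,4)])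
  fix f g :: "'a \<Rightarrow> complex" assume f: "f \<in> l2" and g: "g \<in> l2"
  have "l2_inner (comp_comb r1 r2 a b f) g = a * l2_inner (\<lambda>i. f (r1 i)) g + b * l2_inner (\<lambda>i. f (r2 i)) g"
    unfolding comp_comb_def using f g b by (intro l2_inner_lin_comb_left) (simp_all add: l2_reindex_bij)
  also have "\<dots> = a * l2_inner f (\<lambda>i. g (r1' i)) + b * l2_inner f (\<lambda>i. g (r2' i))"
    using l2_inner_reindex[OF r1] l2_inner_reindex[OF r2] by simp
  also have "\<dots> = l2_inner f (comp_comb r1' r2' (cnj a) (cnj b) g)"
    unfolding comp_comb_def using f g b by (subst l2_inner_lin_comb_right) (simp_all add: l2_reindex_bij)
  finally show "l2_inner (comp_comb r1 r2 a b f) g = l2_inner f (comp_comb r1' r2' (cnj a) (cnj b) g)" .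
qed

lemma commute_op_comp_comb:
  assumes "\<And>x. r1 (r3 x) = r3 (r1 x)" "\<And>x. r1 (r4 x) = r4 (r1 x)"
    "\<And>x. r2 (r3 x) = r3 (r2 x)" "\<And>x. r2 (r4 x) = r4 (r2 x)"
  shows "commute_op (comp_comb r1 r2 a b) (comp_comb r3 r4 c d)"
  unfolding commute_op_def comp_comb_def by (simp add: assms fun_eq_iff algebra_simps)

definition comp_commuting :: "('k \<Rightarrow> 'k) \<Rightarrow> ('k \<Rightarrow> 'k) \<Rightarrow> 'k op \<Rightarrow> bool" where
  "comp_commuting s1 s2 B \<longleftrightarrow> l2_linear B
     \<and> (\<forall>f\<in>l2. B (\<lambda>i. f (s1 i)) = (\<lambda>i. B f (s1 i)))
     \<and> (\<forall>f\<in>l2. B (\<lambda>i. f (s2 i)) = (\<lambda>i. B f (s2 i)))"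

lemma comp_commuting_l2_linear: "comp_commuting s1 s2 B \<Longrightarrow> l2_linear B"
  by (simp add: comp_commuting_def)

lemma comp_commuting_comp_comb:
  assumes "bij r1" "bij r2" "\<And>x. r1 (s1 x) = s1 (r1 x)" "\<And>x. r2 (s1 x) = s1 (r2 x)"
    "\<And>x. r1 (s2 x) = s2 (r1 x)" "\<And>x. r2 (s2 x) = s2 (r2 x)"
  shows "comp_commuting s1 s2 (comp_comb r1 r2 a b)"
  unfolding comp_commuting_def using l2_linear_comp_comb[OF assms(1,2)]
  by (simp add: comp_comb_def assms)

lemma comp_commuting_comp:
  assumes A: "comp_commuting s1 s2 A" and B: "comp_commuting s1 s2 B"
  shows "comp_commuting s1 s2 (\<lambda>f. A (B f))"
  using assms unfolding comp_commuting_def l2_linear_def by simp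

lemma comp_commuting_neumann:
  assumes c: "cmod c < 1" and t: "bij t" "\<And>x. t (s1 x) = s1 (t x)" "\<And>x. t (s2 x) = s2 (t x)"
  shows "comp_commuting s1 s2 (neumann t c)"
  unfolding comp_commuting_def l2_linear_def
  using l2_neumann[OF c t(1)] neumann_lin[OF c] neumann_comp_commute[of t s1] neumann_comp_commute[of t s2] t
  by blast

lemma comp_commuting_resolvent:
  assumes inv: "\<And>x. t (s x) = x" "\<And>x. s (t x) = x"
    and comm: "\<And>x. s (s1 x) = s1 (s x)" "\<And>x. s (s2 x) = s2 (s x)"
    and w: "cmod w \<noteq> 1"
  obtains R where "comp_commuting s1 s2 R" "\<And>g. g \<in> l2 \<Longrightarrow> R (\<lambda>i. g (s i) - w * g i) = g"
proof -
  have bij: "bij s" "bij t" "bij id" using bij_of_inverses inv by auto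
  have comm_t: "t (s1 x) = s1 (t x)" "t (s2 x) = s2 (t x)" for x
    using comm inv by metis+
  show ?thesis
  proof (cases "cmod w < 1")
    case True
    text \<open>\<open>(C\<^sub>s - w)\<^sup>-\<^sup>1 = C\<^sub>t (I - w C\<^sub>t)\<^sup>-\<^sup>1\<close>\<close>
    let ?R = "\<lambda>g. neumann t w (comp_comb t t 1 0 g)"
    have "comp_commuting s1 s2 ?R"
      using comp_commuting_neumann[of w t s1 s2, OF True bij(2) comm_t]
        comp_commuting_comp_comb[of t t s1 s2, OF bij(2,2) comm_t(1,1,2,2)]
      by (rule comp_commuting_comp)
    moreover have "?R (\<lambda>i. g (s i) - w * g i) = g" if "g \<in> l2" for g
      using neumann_telescope[OF True that, of t] by (simp add: comp_comb_def inv)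
    ultimately show ?thesis by (rule that)
  next
    case False
    then have "cmod w > 1" using w by simp
    then have w1: "cmod (1/w) < 1" and "w \<noteq> 0" by (auto simp: norm_divide divide_less_eq)
    text \<open>\<open>(C\<^sub>s - w)\<^sup>-\<^sup>1 = -w\<^sup>-\<^sup>1 (I - w\<^sup>-\<^sup>1 C\<^sub>s)\<^sup>-\<^sup>1\<close>\<close>
    let ?R = "\<lambda>g. neumann s (1/w) (comp_comb id id (-1/w) 0 g)"
    have "comp_commuting s1 s2 ?R"
      using comp_commuting_neumann[of "1/w" s s1 s2, OF w1 bij(1) comm]
        comp_commuting_comp_comb[of id id s1 s2, OF bij(3,3)]
      by (rule comp_commuting_comp) simp_all
    moreover have "?R (\<lambda>i. g (s i) - w * g i) = g" if "g \<in> l2" for g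
    proof -
      have "comp_comb id id (-1/w) 0 (\<lambda>i. g (s i) - w * g i) = (\<lambda>i. g i - 1/w * g (s i))"
        using \<open>w \<noteq> 0\<close> by (simp add: comp_comb_def fun_eq_iff field_simps)
      then show ?thesis using neumann_telescope[OF w1 that, of s] by simp
    qed
    ultimately show ?thesis by (rule that)
  qed
qed

lemma comp_commuting_commute_shift_comp_comb:
  assumes B: "l2_linear B" and r: "bij r1" "bij r2"
    and c: "\<And>f. f \<in> l2 \<Longrightarrow> B (\<lambda>i. f (r1 i)) = (\<lambda>i. B f (r1 i))"
      "\<And>f. f \<in> l2 \<Longrightarrow> B (\<lambda>i. f (r2 i)) = (\<lambda>i. B f (r2 i))"
  shows "commute_op (shift_op (comp_comb r1 r2 a b) c) B"
  unfolding commute_op_def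
proof
  fix f :: "'a \<Rightarrow> complex" assume f: "f \<in> l2"
  have "B (shift_op (comp_comb r1 r2 a b) c f) = B (\<lambda>i. a * f (r1 i) + b * f (r2 i) + (-c) * f i)"
    by (simp add: shift_op_def comp_comb_def)
  also have "\<dots> = (\<lambda>i. a * B (\<lambda>i. f (r1 i)) i + b * B (\<lambda>i. f (r2 i)) i + (-c) * B f i)"
    using f r by (intro l2_linear_lin_comb3[OF B]) (simp_all add: l2_reindex_bij)
  finally show "shift_op (comp_comb r1 r2 a b) c (B f) = B (shift_op (comp_comb r1 r2 a b) c f)"
    by (simp add: c f shift_op_def comp_comb_def)
qed

definition diag_mat :: "complex \<Rightarrow> complex \<Rightarrow> complex^2^2" where
  "diag_mat z1 z2 = (\<chi> i j. if i = j then (if i = 1 then z1 else z2) else 0)"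

lemma norm_diag_mat_mult:
  assumes "cmod z1 = r" "cmod z2 = r"
  shows "norm (diag_mat z1 z2 *v x) = r * norm x"
proof -
  have "(diag_mat z1 z2 *v x) $ 1 = z1 * x$1" "(diag_mat z1 z2 *v x) $ 2 = z2 * x$2"
    by (simp_all add: diag_mat_def matrix_vector_mult_def sum_2)
  then have "norm (diag_mat z1 z2 *v x) = sqrt (r\<^sup>2 * ((cmod (x$1))\<^sup>2 + (cmod (x$2))\<^sup>2))"
    unfolding norm_vec_def L2_set_def using assms
    by (simp add: sum_2 norm_mult power_mult_distrib algebra_simps)
  also have "\<dots> = r * norm x"
    unfolding norm_vec_def L2_set_def using assms norm_ge_zero[of z1] by (simp add: sum_2 real_sqrt_mult)
  finally show ?thesis .
qed

lemma scaled_unimodular_pair_in_symmetrized_bidisc: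
  assumes "cmod w1 = 1" "cmod w2 = 1" "0 \<le> r" "r < 1"
  shows "(of_real r * w1 + of_real r * w2, of_real r * w1 * (of_real r * w2)) \<in> symmetrized_bidisc"
proof -
  have "cmod (of_real r * w1) = r" "cmod (of_real r * w2) = r"
    using assms by (simp_all add: norm_mult)
  then have "onorm (\<lambda>x. diag_mat (of_real r * w1) (of_real r * w2) *v x) \<le> r"
    by (intro onorm_le) (simp add: norm_diag_mat_mult)
  moreover have "mat_tr (diag_mat (of_real r * w1) (of_real r * w2)) = of_real r * w1 + of_real r * w2"
    "det (diag_mat (of_real r * w1) (of_real r * w2)) = of_real r * w1 * (of_real r * w2)"
    by (simp_all add: mat_tr_def det_2 diag_mat_def)
  ultimately show ?thesis
    unfolding symmetrized_bidisc_def using assms(4) by (metis (mono_tags, lifting) le_less_trans mem_Collect_eq)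
qed

lemma unimodular_pair_in_Gamma:
  assumes "cmod w1 = 1" "cmod w2 = 1"
  shows "(w1 + w2, w1 * w2) \<in> Gamma"
  unfolding Gamma_def closure_sequential
proof (intro exI conjI allI)
  define r where "r n = 1 - 1 / (real n + 2)" for n
  show "(of_real (r n) * w1 + of_real (r n) * w2, of_real (r n) * w1 * (of_real (r n) * w2)) \<in> symmetrized_bidisc" for n
    by (rule scaled_unimodular_pair_in_symmetrized_bidisc[OF assms]) (simp_all add: r_def field_simps)
  have "r \<longlonglongrightarrow> 1" unfolding r_def by real_asymp
  then have "(\<lambda>n. complex_of_real (r n)) \<longlonglongrightarrow> 1"
    using tendsto_of_real by fastforce
  from tendsto_Pair[OF tendsto_add[OF tendsto_mult[OF this tendsto_const] tendsto_mult[OF this tendsto_const]]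
      tendsto_mult[OF tendsto_mult[OF this tendsto_const] tendsto_mult[OF this tendsto_const]], of w1 w2 w1 w2]
  show "(\<lambda>n. (of_real (r n) * w1 + of_real (r n) * w2, of_real (r n) * w1 * (of_real (r n) * w2))) \<longlonglongrightarrow> (w1 + w2, w1 * w2)"
    by simp
qed

lemma unimodular_pair_in_bP:
  assumes "cmod w1 = 1" "cmod w2 = 1"
  shows "((w1 - w2)/2, w1 + w2, w1 * w2) \<in> bP"
proof -
  have "cnj w * w = 1" if "cmod w = 1" for w
    using that by (metis complex_norm_square mult.commute of_real_1 power_one)
  then have "w1 + w2 = cnj (w1 + w2) * (w1 * w2)"
    using assms by (simp add: algebra_simps)
  moreover have "cmod (w1 * w2) = 1" using assms by (simp add: norm_mult)
  ultimately have "(w1 + w2, w1 * w2) \<in> bGamma"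
    unfolding bGamma_def using unimodular_pair_in_Gamma[OF assms] by blast
  moreover have "(cmod (w1 - w2))\<^sup>2 + (cmod (w1 + w2))\<^sup>2 = 2*(cmod w1)\<^sup>2 + 2*(cmod w2)\<^sup>2"
    unfolding cmod_power2 by (simp add: power2_eq_square algebra_simps)
  then have "(cmod ((w1 - w2)/2))\<^sup>2 = 1 - (cmod (w1 + w2))\<^sup>2 / 4"
    using assms by (simp add: norm_divide power_divide)
  ultimately show ?thesis
    unfolding bP_def by blast
qed

section \<open>The \<open>\<P>\<close>-unitary of two commuting bijections\<close>

lemma commute_inverse:
  assumes "\<And>x. s' (s x) = x" "\<And>x. s (s' x) = x" "\<And>x. r (s x) = s (r x)"
  shows "r (s' x) = s' (r x)"
  by (metis assms)

lemma normal_op_comp_comb: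
  assumes r1: "\<And>x. r1' (r1 x) = x" "\<And>x. r1 (r1' x) = x"
    and r2: "\<And>x. r2' (r2 x) = x" "\<And>x. r2 (r2' x) = x"
    and comm: "\<And>x. r1 (r2 x) = r2 (r1 x)"
  shows "normal_op (comp_comb r1 r2 a b)"
  unfolding normal_op_def
proof (intro conjI exI)
  show "bounded_op (comp_comb r1 r2 a b)"
    using bij_of_inverses r1 r2 by (intro bounded_op_comp_comb) blast+
  show "is_adjoint (comp_comb r1 r2 a b) (comp_comb r1' r2' (cnj a) (cnj b))"
    using r1 r2 by (rule is_adjoint_comp_comb)
  have "r1 (r2' x) = r2' (r1 x)" "r2 (r1' x) = r1' (r2 x)" for x
    using commute_inverse[OF r2, of r1] commute_inverse[OF r1, of r2] comm by metis+
  then show "commute_op (comp_comb r1 r2 a b) (comp_comb r1' r2' (cnj a) (cnj b))"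
    using r1 r2 by (intro commute_op_comp_comb) metis+
qed

locale commuting_bijections =
  fixes s1 s2 t1 t2 :: "'k \<Rightarrow> 'k"
  assumes inverse1 [simp]: "\<And>x. t1 (s1 x) = x" "\<And>x. s1 (t1 x) = x"
    and inverse2 [simp]: "\<And>x. t2 (s2 x) = x" "\<And>x. s2 (t2 x) = x"
    and commute [simp]: "\<And>x. s1 (s2 x) = s2 (s1 x)"
begin

lemma bij: "bij s1" "bij s2" "bij (\<lambda>x. s2 (s1 x))"
  by (rule bij_of_inverses[of t1], simp_all) (rule bij_of_inverses[of t2], simp_all,
      rule bij_of_inverses[of "\<lambda>x. t1 (t2 x)"], simp_all)

definition U1 :: "'k op" where "U1 = comp_comb s1 s2 (1/2) (-1/2)"
definition U2 :: "'k op" where "U2 = comp_comb s1 s2 1 1"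
definition U3 :: "'k op" where "U3 = comp_comb (\<lambda>x. s2 (s1 x)) (\<lambda>x. s2 (s1 x)) 1 0"

lemma normal_U: "normal_op U1" "normal_op U2" "normal_op U3"
  unfolding U1_def U2_def U3_def
  by (rule normal_op_comp_comb[of t1 s1 t2 s2]; simp)+
    (rule normal_op_comp_comb[of "\<lambda>x. t1 (t2 x)" _ "\<lambda>x. t1 (t2 x)"]; simp)

lemma commute_U: "commute_op U1 U2" "commute_op U1 U3" "commute_op U2 U3"
  unfolding U1_def U2_def U3_def by (rule commute_op_comp_comb; simp)+

lemma commute_shift_U:
  assumes B: "comp_commuting s1 s2 B"
  shows "commute_op (shift_op U1 a) B" "commute_op (shift_op U2 s) B" "commute_op (shift_op U3 p) B"
proof -
  have B1: "B (\<lambda>i. f (s1 i)) = (\<lambda>i. B f (s1 i))" and B2: "B (\<lambda>i. f (s2 i)) = (\<lambda>i. B f (s2 i))"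
    if "f \<in> l2" for f
    using B that by (simp_all add: comp_commuting_def)
  have "B (\<lambda>i. f (s2 (s1 i))) = (\<lambda>i. B f (s2 (s1 i)))" if "f \<in> l2" for f
    using B1[of "\<lambda>i. f (s2 i)"] B2[OF that] that bij(2) by (simp add: l2_reindex_bij)
  note B12 = B1 B2 this
  note lin = comp_commuting_l2_linear[OF B]
  show "commute_op (shift_op U1 a) B" "commute_op (shift_op U2 s) B" "commute_op (shift_op U3 p) B"
    unfolding U1_def U2_def U3_def
    using comp_commuting_commute_shift_comp_comb[OF lin bij(1,2) B12(1,2)]
      comp_commuting_commute_shift_comp_comb[OF lin bij(3,3) B12(3,3)] by blast+
qed

lemma l2_linear_shift_U: "l2_linear (shift_op U1 a)" "l2_linear (shift_op U2 s)" "l2_linear (shift_op U3 p)"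
  unfolding U1_def U2_def U3_def by (intro l2_linear_shift_op l2_linear_comp_comb bij)+

lemma koszul_exact_of_comp_commuting_homotopy:
  assumes B: "comp_commuting s1 s2 B1" "comp_commuting s1 s2 B2" "comp_commuting s1 s2 B3"
    and "c \<noteq> 0"
    and H: "\<And>f. f \<in> l2 \<Longrightarrow>
      vadd (vadd (B1 (shift_op U1 a f)) (B2 (shift_op U2 s f))) (B3 (shift_op U3 p f)) = (\<lambda>i. c * f i)"
  shows "koszul_exact (shift_op U1 a) (shift_op U2 s) (shift_op U3 p)"
proof -
  let ?scaled = "\<lambda>B g. comp_comb id id (1/c) 0 (B g)"
  have scaled: "comp_commuting s1 s2 (?scaled B)" if "comp_commuting s1 s2 B" for B
    by (rule comp_commuting_comp[OF comp_commuting_comp_comb that]) simp_all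
  interpret koszul_homotopy "shift_op U1 a" "shift_op U2 s" "shift_op U3 p"
    "?scaled B1" "?scaled B2" "?scaled B3"
  proof
    show "l2_linear (shift_op U1 a)" "l2_linear (shift_op U2 s)" "l2_linear (shift_op U3 p)"
      by (rule l2_linear_shift_U)+
    show "l2_linear (?scaled B1)" "l2_linear (?scaled B2)" "l2_linear (?scaled B3)"
      using scaled[OF B(1)] scaled[OF B(2)] scaled[OF B(3)] by (simp_all add: comp_commuting_l2_linear)
    show "commute_op T B" if "T \<in> {shift_op U1 a, shift_op U2 s, shift_op U3 p}"
      "B \<in> {?scaled B1, ?scaled B2, ?scaled B3}" for T B
      using that commute_shift_U[OF scaled[OF B(1)]] commute_shift_U[OF scaled[OF B(2)]]
        commute_shift_U[OF scaled[OF B(3)]] by blast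
    show "vadd (vadd (?scaled B1 (shift_op U1 a f)) (?scaled B2 (shift_op U2 s f))) (?scaled B3 (shift_op U3 p f)) = f"
      if "f \<in> l2" for f
      using H[OF that] \<open>c \<noteq> 0\<close> by (simp add: comp_comb_def vadd_def fun_eq_iff field_simps)
  qed
  show ?thesis by (rule koszul_exact)
qed

lemma koszul_exact_of_resolvent:
  assumes R: "comp_commuting s1 s2 R"
    and inverse: "\<And>f. f \<in> l2 \<Longrightarrow> R (\<lambda>i. \<alpha> * shift_op U1 a f i + \<beta> * shift_op U2 s f i) = f"
  shows "koszul_exact (shift_op U1 a) (shift_op U2 s) (shift_op U3 p)"
proof -
  have scale: "comp_commuting s1 s2 (\<lambda>g. comp_comb id id c 0 (R g))" for c
    by (rule comp_commuting_comp[OF comp_commuting_comp_comb R]) simp_all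
  have zero: "comp_commuting s1 s2 (comp_comb id id 0 0)"
    by (rule comp_commuting_comp_comb) simp_all
  show ?thesis
  proof (rule koszul_exact_of_comp_commuting_homotopy[OF scale scale zero one_neq_zero])
    fix f :: "'k \<Rightarrow> complex" assume f: "f \<in> l2"
    have "R (\<lambda>i. \<alpha> * shift_op U1 a f i + \<beta> * shift_op U2 s f i)
        = (\<lambda>i. \<alpha> * R (shift_op U1 a f) i + \<beta> * R (shift_op U2 s f) i)"
      by (rule l2_linear_lin_comb[OF comp_commuting_l2_linear[OF R]
            l2_linear_l2[OF l2_linear_shift_U(1) f] l2_linear_l2[OF l2_linear_shift_U(2) f]])
    then show "vadd (vadd (comp_comb id id \<alpha> 0 (R (shift_op U1 a f))) (comp_comb id id \<beta> 0 (R (shift_op U2 s f))))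
        (comp_comb id id 0 0 (shift_op U3 p f)) = (\<lambda>i. 1 * f i)"
      using inverse[OF f] by (simp add: comp_comb_def vadd_def)
  qed
qed

text \<open>\<open>U\<^sub>1 + U\<^sub>2/2 = C\<^sub>s\<^sub>1\<close> and \<open>-U\<^sub>1 + U\<^sub>2/2 = C\<^sub>s\<^sub>2\<close>, where \<open>C\<^sub>r f = f \<circ> r\<close>.\<close>
lemma koszul_exact_if_norm_ne_1:
  assumes "cmod (s/2 + a) \<noteq> 1"
  shows "koszul_exact (shift_op U1 a) (shift_op U2 s) (shift_op U3 p)"
proof -
  obtain R where R: "comp_commuting s1 s2 R" "\<And>g. g \<in> l2 \<Longrightarrow> R (\<lambda>i. g (s1 i) - (s/2 + a) * g i) = g"
    using comp_commuting_resolvent[of t1 s1 s1 s2 "s/2 + a"] assms by auto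
  show ?thesis
  proof (rule koszul_exact_of_resolvent[OF R(1), where \<alpha> = "1" and \<beta> = "1/2"])
    fix f :: "'k \<Rightarrow> complex" assume "f \<in> l2"
    have "(\<lambda>i. 1 * shift_op U1 a f i + 1/2 * shift_op U2 s f i) = (\<lambda>i. f (s1 i) - (s/2 + a) * f i)"
      by (simp add: U1_def U2_def shift_op_def comp_comb_def fun_eq_iff algebra_simps)
    then show "R (\<lambda>i. 1 * shift_op U1 a f i + 1/2 * shift_op U2 s f i) = f"
      using R(2)[OF \<open>f \<in> l2\<close>] by simp
  qed
qed

lemma koszul_exact_if_norm_ne_2:
  assumes "cmod (s/2 - a) \<noteq> 1"
  shows "koszul_exact (shift_op U1 a) (shift_op U2 s) (shift_op U3 p)"
proof -
  obtain R where R: "comp_commuting s1 s2 R" "\<And>g. g \<in> l2 \<Longrightarrow> R (\<lambda>i. g (s2 i) - (s/2 - a) * g i) = g"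
    using comp_commuting_resolvent[of t2 s2 s1 s2 "s/2 - a"] assms by auto
  show ?thesis
  proof (rule koszul_exact_of_resolvent[OF R(1), where \<alpha> = "-1" and \<beta> = "1/2"])
    fix f :: "'k \<Rightarrow> complex" assume "f \<in> l2"
    have "(\<lambda>i. -1 * shift_op U1 a f i + 1/2 * shift_op U2 s f i) = (\<lambda>i. f (s2 i) - (s/2 - a) * f i)"
      by (simp add: U1_def U2_def shift_op_def comp_comb_def fun_eq_iff algebra_simps)
    then show "R (\<lambda>i. -1 * shift_op U1 a f i + 1/2 * shift_op U2 s f i) = f"
      using R(2)[OF \<open>f \<in> l2\<close>] by simp
  qed
qed

lemma koszul_exact_if_ne_product:
  assumes "p \<noteq> (s/2 + a) * (s/2 - a)"
  shows "koszul_exact (shift_op U1 a) (shift_op U2 s) (shift_op U3 p)"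
proof -
  define w where "w = s/2 + a"
  have B: "comp_commuting s1 s2 (comp_comb s2 id \<alpha> \<beta>)" for \<alpha> \<beta>
    by (rule comp_commuting_comp_comb) (simp_all add: bij)
  text \<open>\<open>(w - C\<^sub>s\<^sub>2) (U\<^sub>1 - a) - (C\<^sub>s\<^sub>2 + w)/2 (U\<^sub>2 - s) + (U\<^sub>3 - p) = w (s/2 - a) - p\<close>\<close>
  show ?thesis
  proof (rule koszul_exact_of_comp_commuting_homotopy[OF B B B])
    show "(s/2 + a) * (s/2 - a) - p \<noteq> 0" using assms by simp
    show "vadd (vadd (comp_comb s2 id (-1) w (shift_op U1 a f))
                     (comp_comb s2 id (-1/2) (-w/2) (shift_op U2 s f)))
               (comp_comb s2 id 0 1 (shift_op U3 p f)) = (\<lambda>i. ((s/2 + a) * (s/2 - a) - p) * f i)" for f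
      by (simp add: U1_def U2_def U3_def shift_op_def comp_comb_def vadd_def fun_eq_iff w_def field_simps)
  qed
qed

lemma taylor_spectrum_subset_bP: "taylor_spectrum U1 U2 U3 \<subseteq> bP"
proof
  fix x assume "x \<in> taylor_spectrum U1 U2 U3"
  then obtain a s p where x: "x = (a, s, p)"
    and "\<not> koszul_exact (shift_op U1 a) (shift_op U2 s) (shift_op U3 p)"
    by (auto simp: taylor_spectrum_def)
  then have "cmod (s/2 + a) = 1" "cmod (s/2 - a) = 1" "p = (s/2 + a) * (s/2 - a)"
    using koszul_exact_if_norm_ne_1 koszul_exact_if_norm_ne_2 koszul_exact_if_ne_product by blast+
  then show "x \<in> bP"
    using unimodular_pair_in_bP[of "s/2 + a" "s/2 - a"] x by simp
qed

lemma P_unitary_U: "P_unitary U1 U2 U3"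
  unfolding P_unitary_def using normal_U commute_U taylor_spectrum_subset_bP by blast

end

lemma
  assumes inj: "inj \<iota>" and F: "\<And>x. F (\<iota> x) = f x" "\<And>j. j \<notin> range \<iota> \<Longrightarrow> F j = 0"
  shows l2_iff_extension_by_zero: "F \<in> l2 \<longleftrightarrow> f \<in> l2"
    and l2_norm_extension_by_zero: "l2_norm F = l2_norm f"
    and l2_inner_extension_by_zero: "l2_inner F g = l2_inner f (\<lambda>x. g (\<iota> x))"
proof -
  note reindex = inj_on_subset[OF inj subset_UNIV]
  have "(\<lambda>j. (cmod (F j))\<^sup>2) summable_on UNIV \<longleftrightarrow> (\<lambda>j. (cmod (F j))\<^sup>2) summable_on range \<iota>"
    by (rule summable_on_cong_neutral) (auto simp: F)
  also have "\<dots> \<longleftrightarrow> (\<lambda>x. (cmod (f x))\<^sup>2) summable_on UNIV"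
    using summable_on_reindex[OF reindex, of "\<lambda>j. (cmod (F j))\<^sup>2"] by (simp add: o_def F)
  finally show "F \<in> l2 \<longleftrightarrow> f \<in> l2" unfolding in_l2_iff .
  have "(\<Sum>\<^sub>\<infinity>j. (cmod (F j))\<^sup>2) = infsum (\<lambda>j. (cmod (F j))\<^sup>2) (range \<iota>)"
    by (rule infsum_cong_neutral) (auto simp: F)
  also have "\<dots> = (\<Sum>\<^sub>\<infinity>x. (cmod (f x))\<^sup>2)"
    using infsum_reindex[OF reindex, of "\<lambda>j. (cmod (F j))\<^sup>2"] by (simp add: o_def F)
  finally show "l2_norm F = l2_norm f" by (simp add: l2_norm_def)
  have "l2_inner F g = infsum (\<lambda>j. F j * cnj (g j)) (range \<iota>)"
    unfolding l2_inner_def by (rule infsum_cong_neutral) (auto simp: F)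
  also have "\<dots> = l2_inner f (\<lambda>x. g (\<iota> x))"
    using infsum_reindex[OF reindex, of "\<lambda>j. F j * cnj (g j)"] by (simp add: o_def F l2_inner_def)
  finally show "l2_inner F g = l2_inner f (\<lambda>x. g (\<iota> x))" .
qed

lemma
  assumes inj: "inj \<iota>" and f: "f \<in> l2"
  shows l2_comp_inj: "(\<lambda>x. f (\<iota> x)) \<in> l2"
    and l2_norm_power2_comp_inj: "(l2_norm (\<lambda>x. f (\<iota> x)))\<^sup>2 = infsum (\<lambda>j. (cmod (f j))\<^sup>2) (range \<iota>)"
    and l2_norm_comp_inj_le: "l2_norm (\<lambda>x. f (\<iota> x)) \<le> l2_norm f"
proof -
  note reindex = inj_on_subset[OF inj subset_UNIV]
  have sf: "(\<lambda>j. (cmod (f j))\<^sup>2) summable_on UNIV" using f by (simp add: in_l2_iff)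
  have sr: "(\<lambda>j. (cmod (f j))\<^sup>2) summable_on range \<iota>" by (rule summable_on_subset_banach[OF sf]) simp
  then show "(\<lambda>x. f (\<iota> x)) \<in> l2"
    using summable_on_reindex[OF reindex, of "\<lambda>j. (cmod (f j))\<^sup>2"] by (simp add: o_def in_l2_iff)
  show sq: "(l2_norm (\<lambda>x. f (\<iota> x)))\<^sup>2 = infsum (\<lambda>j. (cmod (f j))\<^sup>2) (range \<iota>)"
    using infsum_reindex[OF reindex, of "\<lambda>j. (cmod (f j))\<^sup>2"] by (simp add: o_def l2_norm_power2)
  have "infsum (\<lambda>j. (cmod (f j))\<^sup>2) (range \<iota>) \<le> (\<Sum>\<^sub>\<infinity>j. (cmod (f j))\<^sup>2)"
    by (rule infsum_mono_neutral[OF sr sf]) auto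
  then show "l2_norm (\<lambda>x. f (\<iota> x)) \<le> l2_norm f"
    using sq l2_norm_nonneg by (rule_tac power2_le_imp_le) (simp_all add: l2_norm_power2)
qed

lemma bounded_op_comp_inj: "inj \<iota> \<Longrightarrow> bounded_op (\<lambda>f x. f (\<iota> x))"
  unfolding bounded_op_def using l2_comp_inj l2_norm_comp_inj_le
  by (intro conjI ballI allI exI[of _ 1]) auto

lemma infsum_tail_tendsto_zero:
  fixes h :: "nat \<times> 'a \<Rightarrow> real"
  assumes h: "h summable_on UNIV" "\<And>p. 0 \<le> h p"
  shows "(\<lambda>k. infsum h {p. k \<le> fst p}) \<longlonglongrightarrow> 0"
proof (rule LIMSEQ_I)
  fix r :: real assume "0 < r"
  have "(sum h \<longlongrightarrow> infsum h UNIV) (finite_subsets_at_top UNIV)"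
    using h(1) by (simp add: has_sum_def[symmetric])
  then have "\<forall>\<^sub>F F in finite_subsets_at_top UNIV. dist (sum h F) (infsum h UNIV) < r"
    using \<open>0 < r\<close> by (simp add: tendsto_iff)
  then obtain F0 where F0: "finite F0" "dist (sum h F0) (infsum h UNIV) < r"
    unfolding eventually_finite_subsets_at_top by auto
  define K where "K = Suc (Max (insert 0 (fst ` F0)))"
  have K: "p \<in> F0 \<Longrightarrow> fst p < K" for p
    unfolding K_def using F0(1) by (simp add: le_imp_less_Suc)
  have "infsum h {p. n \<le> fst p} < r" if "K \<le> n" for n
  proof -
    have "infsum h {p. n \<le> fst p} \<le> infsum h UNIV - sum h F0"
    proof (rule infsum_le_finite_sums)
      show "h summable_on {p. n \<le> fst p}" by (rule summable_on_subset_banach[OF h(1)]) simp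
      fix G :: "(nat \<times> 'a) set" assume G: "finite G" "G \<subseteq> {p. n \<le> fst p}"
      then have "G \<inter> F0 = {}" using K that by fastforce
      then have "sum h G + sum h F0 = sum h (G \<union> F0)" using G F0 by (simp add: sum.union_disjoint)
      also have "\<dots> \<le> infsum h UNIV" by (rule finite_sum_le_infsum[OF h(1)]) (use G F0 h in auto)
      finally show "sum h G \<le> infsum h UNIV - sum h F0" by simp
    qed
    then show ?thesis using F0(2) unfolding dist_real_def by linarith
  qed
  moreover have "0 \<le> infsum h {p. n \<le> fst p}" for n by (rule infsum_nonneg) (simp add: h)
  ultimately show "\<exists>no. \<forall>n\<ge>no. norm (infsum h {p. n \<le> fst p} - 0) < r" by auto
qed

section \<open>\<open>M\<^sub>z\<^sub>1 M\<^sub>z\<^sub>2\<close> is a pure isometry\<close>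

definition diag_shift :: "nat \<times> nat \<Rightarrow> nat \<times> nat" where
  "diag_shift = (\<lambda>(m, n). (Suc m, Suc n))"

lemma inj_diag_shift: "inj diag_shift"
  unfolding diag_shift_def inj_def by auto

lemma Mz1_Mz2_diag_shift:
  shows "Mz1 (Mz2 f) (diag_shift x) = f x"
    and "j \<notin> range diag_shift \<Longrightarrow> Mz1 (Mz2 f) j = 0"
proof -
  show "Mz1 (Mz2 f) (diag_shift x) = f x" by (cases x) (simp add: diag_shift_def Mz1_def Mz2_def)
  assume "j \<notin> range diag_shift"
  moreover obtain m n where j: "j = (m, n)" by (cases j)
  moreover have "m \<noteq> 0 \<Longrightarrow> n \<noteq> 0 \<Longrightarrow> j = diag_shift (m - 1, n - 1)" using j by (simp add: diag_shift_def)
  ultimately show "Mz1 (Mz2 f) j = 0" by (auto simp: Mz1_def Mz2_def)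
qed

lemma Mz1_Mz2_extension_by_zero:
  shows "Mz1 (Mz2 f) \<in> l2 \<longleftrightarrow> f \<in> l2" and "l2_norm (Mz1 (Mz2 f)) = l2_norm f"
    and "l2_inner (Mz1 (Mz2 f)) g = l2_inner f (\<lambda>x. g (diag_shift x))"
  using l2_iff_extension_by_zero[of diag_shift "Mz1 (Mz2 f)" f]
    l2_norm_extension_by_zero[of diag_shift "Mz1 (Mz2 f)" f]
    l2_inner_extension_by_zero[of diag_shift "Mz1 (Mz2 f)" f]
  by (simp_all add: inj_diag_shift Mz1_Mz2_diag_shift)

lemma funpow_diag_shift: "(diag_shift ^^ k) (m, n) = (m + k, n + k)"
  by (induction k) (simp_all add: diag_shift_def)

lemma l2_norm_funpow_back_shift_tail:
  assumes "f \<in> l2"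
  shows "(l2_norm (((\<lambda>f x. f (diag_shift x)) ^^ k) f))\<^sup>2 \<le> infsum (\<lambda>p. (cmod (f p))\<^sup>2) {p. k \<le> fst p}"
proof -
  have "((\<lambda>f x. f (diag_shift x)) ^^ k) f = (\<lambda>x. f ((diag_shift ^^ k) x))"
    by (induction k) (simp_all add: funpow_swap1)
  moreover have "inj (diag_shift ^^ k)" by (rule inj_fn[OF inj_diag_shift])
  moreover have "range (diag_shift ^^ k) \<subseteq> {p. k \<le> fst p}"
    by (auto simp: funpow_diag_shift)
  moreover have "(\<lambda>p. (cmod (f p))\<^sup>2) summable_on UNIV" using assms by (simp add: in_l2_iff)
  ultimately show ?thesis
    using assms by (simp add: l2_norm_power2_comp_inj)
      (rule infsum_mono_neutral; auto intro: summable_on_subset_banach)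
qed

lemma pure_isometry_Mz1_Mz2: "pure_isometry (\<lambda>f. Mz1 (Mz2 f))"
  unfolding pure_isometry_def isometry_op_def
proof (intro conjI ballI exI)
  show "bounded_op (\<lambda>f. Mz1 (Mz2 f))"
    unfolding bounded_op_def using Mz1_Mz2_extension_by_zero
    by (intro conjI ballI allI exI[of _ 1]) (simp_all add: Mz1_def Mz2_def fun_eq_iff)
  show "l2_norm (Mz1 (Mz2 f)) = l2_norm f" for f by (rule Mz1_Mz2_extension_by_zero)
  show "is_adjoint (\<lambda>f. Mz1 (Mz2 f)) (\<lambda>f x. f (diag_shift x))"
    unfolding is_adjoint_def using bounded_op_comp_inj[OF inj_diag_shift] Mz1_Mz2_extension_by_zero by simp
  fix f :: "nat \<times> nat \<Rightarrow> complex" assume f: "f \<in> l2"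
  have "(\<lambda>k. infsum (\<lambda>p. (cmod (f p))\<^sup>2) {p. k \<le> fst p}) \<longlonglongrightarrow> 0"
    using f by (intro infsum_tail_tendsto_zero) (simp_all add: in_l2_iff)
  then have "(\<lambda>k. (l2_norm (((\<lambda>f x. f (diag_shift x)) ^^ k) f))\<^sup>2) \<longlonglongrightarrow> 0"
    by (rule tendsto_sandwich[rotated 2, OF tendsto_const])
      (simp_all add: l2_norm_funpow_back_shift_tail[OF f])
  then have "(\<lambda>k. sqrt ((l2_norm (((\<lambda>f x. f (diag_shift x)) ^^ k) f))\<^sup>2)) \<longlonglongrightarrow> sqrt 0"
    by (rule tendsto_real_sqrt)
  then show "(\<lambda>k. l2_norm (((\<lambda>f x. f (diag_shift x)) ^^ k) f)) \<longlonglongrightarrow> 0"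
    by (simp add: l2_norm_nonneg)
qed

section \<open>\<open>H\<^sup>2(\<bbbD>\<^sup>2)\<close> inside \<open>\<ell>\<^sup>2(\<int>\<^sup>2)\<close>\<close>

locale lattice_coordinates =
  fixes c :: "'k \<Rightarrow> int \<times> int"
  assumes bij_c: "bij c"
begin

definition lattice_shift :: "int \<Rightarrow> int \<Rightarrow> 'k \<Rightarrow> 'k" where
  "lattice_shift d1 d2 j = inv c (fst (c j) - d1, snd (c j) - d2)"

lemma c_lattice_shift [simp]: "c (lattice_shift d1 d2 j) = (fst (c j) - d1, snd (c j) - d2)"
  by (simp add: lattice_shift_def bij_c bij_is_surj surj_f_inv_f)

lemma lattice_shift_lattice_shift:
  "lattice_shift d1 d2 (lattice_shift e1 e2 j) = lattice_shift (d1 + e1) (d2 + e2) j"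
  "lattice_shift 0 0 j = j"
  by (simp_all only: lattice_shift_def[of d1 d2 "lattice_shift e1 e2 j"] c_lattice_shift)
    (simp_all add: lattice_shift_def bij_c bij_is_inj inv_f_f algebra_simps)

sublocale commuting_bijections "lattice_shift 1 0" "lattice_shift 0 1" "lattice_shift (-1) 0" "lattice_shift 0 (-1)"
  by unfold_locales (simp_all add: lattice_shift_lattice_shift add.commute)

definition embed :: "(nat \<times> nat \<Rightarrow> complex) \<Rightarrow> 'k \<Rightarrow> complex" where
  "embed f j = (if 0 \<le> fst (c j) \<and> 0 \<le> snd (c j) then f (nat (fst (c j)), nat (snd (c j))) else 0)"

definition lattice_point :: "nat \<times> nat \<Rightarrow> 'k" where
  "lattice_point = (\<lambda>(m, n). inv c (int m, int n))"

lemma embed_extension_by_zero: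
  shows "inj lattice_point" and "embed f (lattice_point x) = f x"
    and "j \<notin> range lattice_point \<Longrightarrow> embed f j = 0"
proof -
  have c_point: "c (lattice_point (m, n)) = (int m, int n)" for m n
    by (simp add: lattice_point_def bij_c bij_is_surj surj_f_inv_f)
  show "inj lattice_point"
    by (rule injI) (metis c_point prod.exhaust of_nat_eq_iff prod.inject)
  show "embed f (lattice_point x) = f x"
    by (cases x) (simp add: embed_def c_point)
  assume "j \<notin> range lattice_point"
  moreover have "j = lattice_point (nat (fst (c j)), nat (snd (c j)))"
    if "0 \<le> fst (c j)" "0 \<le> snd (c j)"
    using that bij_c by (simp add: lattice_point_def bij_is_inj inv_f_eq)
  ultimately show "embed f j = 0" unfolding embed_def by auto
qed

lemma embed_lattice_shift: "embed f (lattice_shift 1 0 j) = embed (Mz1 f) j"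
  "embed f (lattice_shift 0 1 j) = embed (Mz2 f) j"
  by (auto simp: embed_def Mz1_def Mz2_def nat_diff_distrib)

theorem P_isometry_in_Hardy_space:
  "P_isometry_in TYPE('k) (\<lambda>f i. (Mz1 f i - Mz2 f i) / 2) (\<lambda>f i. Mz1 f i + Mz2 f i) (\<lambda>f. Mz1 (Mz2 f))"
  unfolding P_isometry_in_def
proof (intro exI conjI ballI allI)
  show "P_unitary U1 U2 U3" by (rule P_unitary_U)
  fix f :: "nat \<times> nat \<Rightarrow> complex"
  show "embed f \<in> l2" "l2_norm (embed f) = l2_norm f" if "f \<in> l2"
    using that l2_iff_extension_by_zero[of lattice_point "embed f" f] l2_norm_extension_by_zero[of lattice_point "embed f" f]
    by (simp_all add: embed_extension_by_zero)
  show "U1 (embed f) = embed (\<lambda>i. (Mz1 f i - Mz2 f i) / 2)" "U2 (embed f) = embed (\<lambda>i. Mz1 f i + Mz2 f i)"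
    "U3 (embed f) = embed (Mz1 (Mz2 f))"
    by (simp_all add: U1_def U2_def U3_def comp_comb_def embed_lattice_shift fun_eq_iff)
      (simp_all add: embed_def diff_divide_distrib)
  show "embed (\<lambda>i. a * f i + g i) = (\<lambda>i. a * embed f i + embed g i)" for g a
    by (simp add: embed_def fun_eq_iff)
qed

end

theorem mainTheorem13:
  shows "pure_P_isometry_in TYPE(nat)
           (\<lambda>f i. (Mz1 f i - Mz2 f i) / 2)
           (\<lambda>f i. Mz1 f i + Mz2 f i)
           (\<lambda>f. Mz1 (Mz2 f))"
proof -
  have "bij (from_nat_into (UNIV :: (int \<times> int) set))"
    using bij_betw_from_nat_into[of "UNIV :: (int \<times> int) set"] by (simp add: bij_def bij_betw_def finite_prod)
  then interpret lattice_coordinates "from_nat_into (UNIV :: (int \<times> int) set)"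
    by unfold_locales
  show ?thesis
    unfolding pure_P_isometry_in_def using P_isometry_in_Hardy_space pure_isometry_Mz1_Mz2 by blast
qed

end
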